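(* Under the standing assumptions below, the closure $\overline{\mathcal P_1}$ is a perfect set; consequently $\overline{\mathcal P_1}$ is uncountable and $\overline{\mathcal P_1}\setminus\mathcal P_1$ is uncountable.
   Context: Fix $\rho_1,\rho_2,\rho_3\in(0,1)$ with $\rho_1+\rho_2+\rho_3>1$ and $\rho_i+\rho_j\le1$ for all $i\ne j$; $\mu_i=1$, $\theta:=\rho_1+\rho_2+\rho_3-1$. $A_i^0:=\{y\in\mathbb R^3: y_1+y_2+y_3=1, y_i=0, y_l\ge0\}$, $A^0:=\bigcup_iA_i^0$; for $z\in A^0\setminus A_j^0$, $f_j(z):=\sum_{i\neq j}\frac{(1-\rho_j)z_i+\rho_i z_j}{(1-\rho_j)+\theta z_j}e_i$. For $(\hat i,\hat j,\hat k)$ equal to $(1,2,3)$ or a cyclic permutation, $(1-x)e_{\hat j}+xe_{\hat k}\in A^0_{\hat i}$ is written $(x,\hat i)$. Decision points $d_1,d_2,d_3\in(0,1)$ (identified with $(d_{\hat i},\hat i)$); switching rule $\mathfrak R((x,\hat i))=\hat j$ if $x<d_{\hat i}$, $\hat k$ if $x>d_{\hat i}$, both allowed if $x=d_{\hat i}$; $\varphi(z):=f_{\mathfrak R(z)}(z)$. A trajectory is $(z(t))$ with $z(t+1)\in\varphi(z(t))$; $z$ is a pre-image of $z'$ if some trajectory from $z$ has $z(t)=z'$ for some $t\ge1$. Standing assumption: $d_1$ has infinitely many distinct pre-images, while $d_2$ and $d_3$ have only finitely many. $\mathcal P_1$ is the set consisting of $d_1$ and all its pre-images; closure is with respect to the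 Euclidean topology on $A^0$. *)

theory Defs
  imports "HOL-Analysis.Analysis"
begin

text \<open>Points of R^3 are vectors of type real^3; indices are elements of the numeral
type 3, whose elements 1, 2, 3 are the three coordinates (3 = 0 in this type, so that
index arithmetic is cyclic: i+1, i+2 give the cyclic successors).\<close>

definition theta :: "(3 \<Rightarrow> real) \<Rightarrow> real" where
  "theta rho = rho 1 + rho 2 + rho 3 - 1"

definition A0i :: "3 \<Rightarrow> (real^3) set" where
  "A0i i = {y. y$1 + y$2 + y$3 = 1 \<and> y$i = 0 \<and> (\<forall>l. y$l \<ge> 0)}"

definition A0 :: "(real^3) set" where
  "A0 = (\<Union>i. A0i i)"

text \<open>The map f_j (only used for z in A0 - A0i j).\<close>
definition fmap :: "(3 \<Rightarrow> real) \<Rightarrow> 3 \<Rightarrow> real^3 \<Rightarrow> real^3" where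
  "fmap rho j z = (\<chi> i. if i = j then 0 else
      ((1 - rho j) * z$i + rho i * z$j) / ((1 - rho j) + theta rho * z$j))"

definition pt :: "real \<Rightarrow> 3 \<Rightarrow> real^3" where
  "pt x i = (1 - x) *\<^sub>R axis (i + 1) 1 + x *\<^sub>R axis (i + 2) 1"

text \<open>Switching rule as a relation: rule d z j means j is an allowed value of R(z).\<close>
definition rule :: "(3 \<Rightarrow> real) \<Rightarrow> real^3 \<Rightarrow> 3 \<Rightarrow> bool" where
  "rule d z j \<longleftrightarrow> (\<exists>i x. 0 \<le> x \<and> x \<le> 1 \<and> z = pt x i \<and>
      ((x < d i \<and> j = i + 1) \<or> (x > d i \<and> j = i + 2) \<or>
       (x = d i \<and> (j = i + 1 \<or> j = i + 2))))"

definition phi :: "(3 \<Rightarrow> real) \<Rightarrow> (3 \<Rightarrow> real) \<Rightarrow> real^3 \<Rightarrow> (real^3) set" where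
  "phi rho d z = {fmap rho j z | j. rule d z j}"

definition trajectory :: "(3 \<Rightarrow> real) \<Rightarrow> (3 \<Rightarrow> real) \<Rightarrow> (nat \<Rightarrow> real^3) \<Rightarrow> bool" where
  "trajectory rho d zs \<longleftrightarrow> (\<forall>t. zs (Suc t) \<in> phi rho d (zs t))"

definition preimage :: "(3 \<Rightarrow> real) \<Rightarrow> (3 \<Rightarrow> real) \<Rightarrow> real^3 \<Rightarrow> real^3 \<Rightarrow> bool" where
  "preimage rho d z z' \<longleftrightarrow>
     (\<exists>zs t. trajectory rho d zs \<and> zs 0 = z \<and> t \<ge> 1 \<and> zs t = z')"

definition dpt :: "(3 \<Rightarrow> real) \<Rightarrow> 3 \<Rightarrow> real^3" where
  "dpt d i = pt (d i) i"

definition P1 :: "(3 \<Rightarrow> real) \<Rightarrow> (3 \<Rightarrow> real) \<Rightarrow> (real^3) set" where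
  "P1 rho d = insert (dpt d 1) {z. preimage rho d z (dpt d 1)}"

definition perfect_set :: "'a::topological_space set \<Rightarrow> bool" where
  "perfect_set S \<longleftrightarrow> closed S \<and> (\<forall>x\<in>S. x islimpt S)"

end

(*
  Every point of the boundary A0 of the simplex has at most one preimage under the switching
  map phi, so the preimages of d1 form a single backward orbit w 0 = d1, w 1, w 2, ...,
  injective because there are infinitely many of them. Off the decision points, phi acts
  on each edge by a continuous branch that does not increase distances.

  Infinitely many w m lie on one edge and accumulate there. Given k, take a short interval
  of that edge free of w 0, ..., w k, of d2, d3 and of their finitely many preimages, and
  let w a and w b (a < b, a minimal) lie in it. By minimality of a, the forward images of
  the segment between them avoid every decision point for a - k steps, so they remain
  segments no longer than the original one; after a - k steps their endpoints are w k and
  w (b - a + k), which are therefore close. So P1 has no isolated points, its closure is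
  perfect, hence uncountable by the Baire category theorem, while P1 itself is countable.
*)
theory Submission
  imports Defs
begin

lemma perfect_set_closure:
  assumes "\<And>x. x \<in> S \<Longrightarrow> x islimpt S"
  shows "perfect_set (closure S)"
  unfolding perfect_set_def
proof (intro conjI ballI)
  fix x
  assume "x \<in> closure S"
  then have "x islimpt S" using assms unfolding closure_def by blast
  then show "x islimpt closure S" using closure_subset by (rule islimpt_subset)
qed simp

text \<open>By Baire, a nonempty perfect set is not the countable union of its singletons, which
  are nowhere dense in it.\<close>

lemma perfect_set_uncountable:
  fixes S :: "'a::{real_normed_vector,heine_borel} set"
  assumes "perfect_set S" "S \<noteq> {}"
  shows "uncountable S"
proof
  assume "countable S"
  let ?G = "(\<lambda>x. S - {x}) ` S"
  have "S \<subseteq> closure (\<Inter>?G)"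
  proof (rule Baire)
    show "closed S" using assms(1) unfolding perfect_set_def by blast
    show "countable ?G" using \<open>countable S\<close> by simp
  next
    fix T
    assume "T \<in> ?G"
    then obtain x where "x \<in> S" "T = S - {x}" by blast
    have "x \<in> closure (S - {x})"
      using assms(1) \<open>x \<in> S\<close> unfolding perfect_set_def islimpt_in_closure by blast
    then have "S \<subseteq> closure (S - {x})" using closure_subset[of "S - {x}"] by blast
    then show "openin (top_of_set S) T \<and> S \<subseteq> closure T"
      using \<open>T = S - {x}\<close> by (simp add: openin_delete)
  qed
  moreover have "\<Inter>?G = {}" using assms(2) by auto
  ultimately show False using assms(2) by simp
qed

lemma islimpt_interval_avoiding_finite:
  fixes x :: real
  assumes "x islimpt T" "finite B" "0 < \<delta>"
  obtains lo hi where "infinite (T \<inter> {lo<..<hi})" "B \<inter> {lo<..<hi} = {}" "hi - lo \<le> \<delta>"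
proof -
  define r where "r = Min (insert \<delta> ((\<lambda>b. \<bar>b - x\<bar>) ` (B - {x})))"
  have r_pos: "0 < r"
    unfolding r_def using assms(2,3) by (subst Min_gr_iff) auto
  have r_le: "r \<le> \<delta>"
    unfolding r_def using assms(2) by (intro Min_le) auto
  have r_B: "r \<le> \<bar>b - x\<bar>" if "b \<in> B" "b \<noteq> x" for b
    unfolding r_def using assms(2) that by (intro Min_le) auto
  have left: "B \<inter> {x - r<..<x} = {}" and right: "B \<inter> {x<..<x + r} = {}"
    using r_B by force+
  have "infinite (T \<inter> ball x r)" using assms(1) r_pos islimpt_eq_infinite_ball by blast
  moreover have "T \<inter> ball x r \<subseteq> insert x (T \<inter> {x - r<..<x} \<union> T \<inter> {x<..<x + r})"
    by (auto simp: dist_real_def)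
  ultimately consider "infinite (T \<inter> {x - r<..<x})" | "infinite (T \<inter> {x<..<x + r})"
    using finite_subset by auto
  then show thesis
  proof cases
    case 1
    then show thesis using that[of "x - r" x] left r_le by simp
  next
    case 2
    then show thesis using that[of x "x + r"] right r_le by simp
  qed
qed

subsection \<open>Linear fractional maps\<close>

definition lin_frac :: "real \<Rightarrow> real \<Rightarrow> real \<Rightarrow> real \<Rightarrow> real" where
  "lin_frac r c t u = r * u / (c + t * u)"

lemma lin_frac_diff:
  assumes "c + t * u \<noteq> 0" "c + t * v \<noteq> 0"
  shows "lin_frac r c t u - lin_frac r c t v = r * c * (u - v) / ((c + t * u) * (c + t * v))"
  using assms unfolding lin_frac_def by (simp add: field_simps)

lemma lin_frac_denom_pos: "0 < c \<Longrightarrow> 0 \<le> t \<Longrightarrow> 0 \<le> u \<Longrightarrow> 0 < c + t * (u::real)"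
  by (simp add: add_pos_nonneg)

lemma lin_frac_nonexpansive:
  assumes "0 < r" "r \<le> c" "c \<le> 1" "0 \<le> t" "0 \<le> u" "0 \<le> v"
  shows "\<bar>lin_frac r c t u - lin_frac r c t v\<bar> \<le> \<bar>u - v\<bar>"
proof -
  have du: "0 < c + t * u" and dv: "0 < c + t * v" using assms lin_frac_denom_pos by simp_all
  then have pos: "0 < (c + t * u) * (c + t * v)" by simp
  have "r * c \<le> c * c" using assms by (intro mult_right_mono) auto
  also have "c * c \<le> (c + t * u) * (c + t * v)" using assms by (intro mult_mono) auto
  finally have factor: "r * c / ((c + t * u) * (c + t * v)) \<le> 1"
    using pos by (simp add: divide_le_eq_1_pos)
  have "\<bar>lin_frac r c t u - lin_frac r c t v\<bar>
      = r * c / ((c + t * u) * (c + t * v)) * \<bar>u - v\<bar>"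
    using assms du dv by (simp add: lin_frac_diff abs_mult)
  also have "\<dots> \<le> \<bar>u - v\<bar>"
    using factor assms pos by (intro mult_left_le_one_le) auto
  finally show ?thesis .
qed

lemma lin_frac_inj:
  assumes "0 < r" "0 < c" "0 \<le> t" "0 \<le> u" "0 \<le> v" "lin_frac r c t u = lin_frac r c t v"
  shows "u = v"
  using lin_frac_diff[of c t u v r] lin_frac_denom_pos[of c t u] lin_frac_denom_pos[of c t v] assms by simp

lemma lin_frac_range:
  assumes "0 < r" "r \<le> c" "0 < t" "0 < u" "u \<le> 1"
  shows "0 < lin_frac r c t u \<and> lin_frac r c t u < 1"
proof -
  have pos: "0 < c + t * u" using assms lin_frac_denom_pos by simp
  have "r * u \<le> c" using assms mult_mono[of r c u 1] by simp
  also have "c < c + t * u" using assms by simp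
  finally show ?thesis using assms pos unfolding lin_frac_def by (simp add: divide_less_eq_1_pos)
qed

lemma continuous_on_lin_frac:
  assumes "0 < c" "0 \<le> t"
  shows "continuous_on {0..} (lin_frac r c t)"
  unfolding lin_frac_def
  by (intro continuous_intros) (use assms lin_frac_denom_pos in fastforce)

lemma plus_3_simps [simp]:
  fixes i :: 3
  shows "i + 1 \<noteq> i" "i + 2 \<noteq> i" "i + 1 \<noteq> i + 2" "i + 2 \<noteq> i + 1"
    "i \<noteq> i + 1" "i \<noteq> i + 2"
    "i + 1 + 1 = i + 2" "i + 1 + 2 = i" "i + 2 + 1 = i" "i + 2 + 2 = i + 1"
  using exhaust_3[of i] by auto

lemma exhaust_3_rotate: "(k::3) = i \<or> k = i + 1 \<or> k = i + 2"
  using exhaust_3[of i] exhaust_3[of k] by auto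

lemma theta_rotate: "theta rho = rho i + rho (i + 1) + rho (i + 2) - 1"
proof -
  have sums: "(1::3) + 1 = 2" "(1::3) + 2 = 3" "(2::3) + 1 = 3" "(2::3) + 2 = 1"
    "(3::3) + 1 = 1" "(3::3) + 2 = 2"
    by simp_all
  show ?thesis
    unfolding theta_def using exhaust_3[of i] by (auto simp only: sums)
qed

lemma pt_nth: "pt x i $ k = (if k = i + 1 then 1 - x else if k = i + 2 then x else 0)"
  unfolding pt_def by (auto simp: axis_def)

lemma pt_nth_simps [simp]: "pt x i $ i = 0" "pt x i $ (i + 1) = 1 - x" "pt x i $ (i + 2) = x"
  by (auto simp: pt_nth)

lemma pt_eq_iff_same_edge [simp]: "pt x i = pt y i \<longleftrightarrow> x = y"
  by (metis pt_nth_simps(3))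

lemma pt_eq_interior:
  assumes "pt x i = pt y e" "0 < x" "x < 1"
  shows "e = i \<and> y = x"
proof -
  have "e \<noteq> i + 1" using arg_cong[OF assms(1), of "\<lambda>z. z $ (i + 1)"] assms(2,3) by auto
  moreover have "e \<noteq> i + 2" using arg_cong[OF assms(1), of "\<lambda>z. z $ (i + 2)"] assms(2,3) by auto
  ultimately have "e = i" using exhaust_3_rotate[of e i] by auto
  then show ?thesis using assms(1) by simp
qed

lemma pt_0_eq_pt_1: "pt 0 i = pt 1 (i + 2)"
  using exhaust_3_rotate[of _ i] by (auto simp: vec_eq_iff pt_nth)

lemma dist_pt_le: "dist (pt x e) (pt y e) \<le> 2 * \<bar>x - y\<bar>"
proof -
  have "pt x e - pt y e = (y - x) *\<^sub>R axis (e + 1) 1 + (x - y) *\<^sub>R axis (e + 2) (1::real)"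
    unfolding pt_def by (simp add: algebra_simps)
  then have "dist (pt x e) (pt y e)
      \<le> norm ((y - x) *\<^sub>R axis (e + 1) (1::real)) + norm ((x - y) *\<^sub>R axis (e + 2) (1::real))"
    by (metis dist_norm norm_triangle_ineq)
  then show ?thesis by (simp add: abs_minus_commute)
qed

subsection \<open>The two branches of the switching map\<close>

locale switching_system =
  fixes rho d :: "3 \<Rightarrow> real"
  assumes rho_range: "\<And>i. 0 < rho i \<and> rho i < 1"
    and rho_sum: "rho 1 + rho 2 + rho 3 > 1"
    and rho_pair: "\<And>i j. i \<noteq> j \<Longrightarrow> rho i + rho j \<le> 1"
    and d_range: "\<And>i. 0 < d i \<and> d i < 1"
begin

text \<open>In the coordinate \<open>x\<close> of \<open>pt x i\<close>, the maps \<open>f\<^sub>i\<^sub>+\<^sub>1\<close> and \<open>f\<^sub>i\<^sub>+\<^sub>2\<close> act on the edge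
  \<open>A0i i\<close> as \<open>low i\<close> and \<open>high i\<close>; the switching rule applies \<open>low i\<close> below \<open>d i\<close> and
  \<open>high i\<close> above it.\<close>

definition low :: "3 \<Rightarrow> real \<Rightarrow> real" where
  "low i x = lin_frac (rho i) (1 - rho (i + 1)) (theta rho) (1 - x)"

definition high :: "3 \<Rightarrow> real \<Rightarrow> real" where
  "high i x = 1 - lin_frac (rho i) (1 - rho (i + 2)) (theta rho) x"

lemma theta_pos: "theta rho > 0"
  using rho_sum unfolding theta_def by simp

lemma rho_le_one_minus: "rho i \<le> 1 - rho (i + 1)" "rho i \<le> 1 - rho (i + 2)"
  using rho_pair[of i "i + 1"] rho_pair[of i "i + 2"] by auto

lemma low_denom_pos: "x \<le> 1 \<Longrightarrow> (1 - rho (i + 1)) + theta rho * (1 - x) > 0"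
  using rho_range[of "i + 1"] theta_pos by (simp add: add_pos_nonneg)

lemma high_denom_pos: "0 \<le> x \<Longrightarrow> (1 - rho (i + 2)) + theta rho * x > 0"
  using rho_range[of "i + 2"] theta_pos by (simp add: add_pos_nonneg)

lemma fmap_low:
  assumes "x \<le> 1"
  shows "fmap rho (i + 1) (pt x i) = pt (low i x) (i + 1)"
proof -
  have "fmap rho (i + 1) (pt x i) $ k = pt (low i x) (i + 1) $ k" for k
    using exhaust_3_rotate[of k i]
  proof (elim disjE)
    assume "k = i + 2"
    then show ?thesis using low_denom_pos[OF assms, of i]
      by (simp add: fmap_def pt_nth low_def lin_frac_def field_simps theta_rotate[of rho i])
  qed (auto simp: fmap_def pt_nth low_def lin_frac_def)
  then show ?thesis by (simp add: vec_eq_iff)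
qed

lemma fmap_high:
  assumes "0 \<le> x"
  shows "fmap rho (i + 2) (pt x i) = pt (high i x) (i + 2)"
proof -
  have "fmap rho (i + 2) (pt x i) $ k = pt (high i x) (i + 2) $ k" for k
    using exhaust_3_rotate[of k i]
  proof (elim disjE)
    assume "k = i"
    then show ?thesis using high_denom_pos[OF assms, of i]
      by (simp add: fmap_def pt_nth high_def lin_frac_def field_simps)
  next
    assume "k = i + 1"
    then show ?thesis using high_denom_pos[OF assms, of i]
      by (simp add: fmap_def pt_nth high_def lin_frac_def field_simps theta_rotate[of rho i])
  qed (auto simp: fmap_def)
  then show ?thesis by (simp add: vec_eq_iff)
qed

lemma low_range: "0 \<le> x \<Longrightarrow> x < 1 \<Longrightarrow> 0 < low i x \<and> low i x < 1"
  unfolding low_def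
  using rho_range[of i] rho_le_one_minus(1)[of i] theta_pos by (intro lin_frac_range) auto

lemma high_range: "0 < x \<Longrightarrow> x \<le> 1 \<Longrightarrow> 0 < high i x \<and> high i x < 1"
  unfolding high_def
  using lin_frac_range[of "rho i" "1 - rho (i + 2)" "theta rho" x]
    rho_range[of i] rho_le_one_minus(2)[of i] theta_pos
  by auto

lemma low_nonexpansive:
  "0 \<le> x \<Longrightarrow> x \<le> 1 \<Longrightarrow> 0 \<le> y \<Longrightarrow> y \<le> 1 \<Longrightarrow> \<bar>low i x - low i y\<bar> \<le> \<bar>x - y\<bar>"
  unfolding low_def
  using lin_frac_nonexpansive[of "rho i" "1 - rho (i + 1)" "theta rho" "1 - x" "1 - y"]
    rho_range[of i] rho_range[of "i + 1"] rho_le_one_minus(1)[of i] theta_pos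
  by (simp add: abs_minus_commute)

lemma high_nonexpansive:
  "0 \<le> x \<Longrightarrow> x \<le> 1 \<Longrightarrow> 0 \<le> y \<Longrightarrow> y \<le> 1 \<Longrightarrow> \<bar>high i x - high i y\<bar> \<le> \<bar>x - y\<bar>"
  unfolding high_def
  using lin_frac_nonexpansive[of "rho i" "1 - rho (i + 2)" "theta rho" x y]
    rho_range[of i] rho_range[of "i + 2"] rho_le_one_minus(2)[of i] theta_pos
  by (simp add: abs_minus_commute)

lemma low_inj: "0 \<le> x \<Longrightarrow> x \<le> 1 \<Longrightarrow> 0 \<le> y \<Longrightarrow> y \<le> 1 \<Longrightarrow> low i x = low i y \<Longrightarrow> x = y"
  unfolding low_def
  using lin_frac_inj[of "rho i" "1 - rho (i + 1)" "theta rho" "1 - x" "1 - y"]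
    rho_range[of i] rho_range[of "i + 1"] theta_pos
  by simp

lemma high_inj: "0 \<le> x \<Longrightarrow> 0 \<le> y \<Longrightarrow> high i x = high i y \<Longrightarrow> x = y"
  unfolding high_def
  using lin_frac_inj[of "rho i" "1 - rho (i + 2)" "theta rho" x y]
    rho_range[of i] rho_range[of "i + 2"] theta_pos
  by simp

lemma continuous_on_low: "continuous_on {0..1} (low i)"
proof -
  have "continuous_on {0..1} (lin_frac (rho i) (1 - rho (i + 1)) (theta rho) \<circ> (\<lambda>x. 1 - x))"
    using rho_range[of "i + 1"] theta_pos
    by (intro continuous_on_compose continuous_intros
        continuous_on_subset[OF continuous_on_lin_frac]) auto
  then show ?thesis by (simp add: low_def o_def)
qed

lemma continuous_on_high: "continuous_on {0..1} (high i)"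
  unfolding high_def
  using rho_range[of "i + 2"] theta_pos
  by (intro continuous_intros continuous_on_subset[OF continuous_on_lin_frac]) auto

lemma low_gap:
  assumes "x \<le> 1"
  shows "rho i - low i x * (rho i + rho (i + 2))
    = rho i * (1 - rho (i + 1)) * x / ((1 - rho (i + 1)) + theta rho * (1 - x))"
  using low_denom_pos[OF assms, of i]
  by (simp add: low_def lin_frac_def field_simps theta_rotate[of rho i])

lemma high_gap:
  assumes "0 \<le> x"
  shows "high (i + 2) x * (rho i + rho (i + 2)) - rho i
    = rho (i + 2) * (1 - rho (i + 1)) * (1 - x) / ((1 - rho (i + 1)) + theta rho * x)"
proof -
  define D where "D = (1 - rho (i + 1)) + theta rho * x"
  have "D > 0" using high_denom_pos[OF assms, of "i + 2"] unfolding D_def by simp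
  have high: "high (i + 2) x = 1 - rho (i + 2) * x / D"
    unfolding high_def lin_frac_def D_def by simp
  have "high (i + 2) x * (rho i + rho (i + 2)) - rho i
      = (rho (i + 2) * D - rho (i + 2) * x * (rho i + rho (i + 2))) / D"
    unfolding high using \<open>D > 0\<close> by (simp add: field_simps)
  also have "rho (i + 2) * D - rho (i + 2) * x * (rho i + rho (i + 2))
      = rho (i + 2) * (1 - rho (i + 1)) * (1 - x)"
    unfolding D_def theta_rotate[of rho i] by (simp add: algebra_simps)
  finally show ?thesis unfolding D_def .
qed

text \<open>The images of \<open>low i\<close> and \<open>high (i + 2)\<close>, both on the edge \<open>i + 1\<close>, lie on either side
  of \<open>rho i / (rho i + rho (i + 2))\<close> and meet only at a vertex.\<close>

lemma low_eq_high_imp_vertex: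
  assumes "0 \<le> x" "x \<le> 1" "0 \<le> y" "y \<le> 1" "low i x = high (i + 2) y"
  shows "x = 0 \<and> y = 1"
proof -
  let ?a = "rho i * (1 - rho (i + 1)) * x / ((1 - rho (i + 1)) + theta rho * (1 - x))"
  let ?b = "rho (i + 2) * (1 - rho (i + 1)) * (1 - y) / ((1 - rho (i + 1)) + theta rho * y)"
  have pos: "0 < (1 - rho (i + 1)) + theta rho * (1 - x)" "0 < (1 - rho (i + 1)) + theta rho * y"
    "0 < rho i" "0 < rho (i + 2)" "0 < 1 - rho (i + 1)"
    using low_denom_pos[of x i] high_denom_pos[of y "i + 2"] rho_range[of i] rho_range[of "i + 2"]
      rho_range[of "i + 1"] assms
    by auto
  have "?a + ?b = 0"
    using low_gap[OF assms(2), of i] high_gap[OF assms(3), of i] assms(5) by simp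
  moreover have "?a \<ge> 0" "?b \<ge> 0" using pos assms by simp_all
  ultimately have "?a = 0" "?b = 0" by linarith+
  then show ?thesis using pos by simp
qed

definition step :: "real^3 \<Rightarrow> real^3 \<Rightarrow> bool" where
  "step z z' \<longleftrightarrow> z' \<in> phi rho d z"

lemma step_cases:
  assumes "step z z'"
  obtains i x where "0 \<le> x" "x \<le> 1" "z = pt x i"
    "x \<le> d i \<and> z' = pt (low i x) (i + 1) \<or> d i \<le> x \<and> z' = pt (high i x) (i + 2)"
proof -
  obtain j where j: "z' = fmap rho j z" "rule d z j"
    using assms unfolding step_def phi_def by auto
  then obtain i x where ix: "0 \<le> x" "x \<le> 1" "z = pt x i"
    "x < d i \<and> j = i + 1 \<or> x > d i \<and> j = i + 2 \<or> x = d i \<and> (j = i + 1 \<or> j = i + 2)"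
    unfolding rule_def by blast
  have "j = i + 1 \<Longrightarrow> z' = pt (low i x) (i + 1)" using j(1) ix(2,3) fmap_low by simp
  moreover have "j = i + 2 \<Longrightarrow> z' = pt (high i x) (i + 2)" using j(1) ix(1,3) fmap_high by simp
  ultimately show thesis
    using that[OF ix(1-3)] ix(4) by force
qed

lemma step_low:
  assumes "0 \<le> x" "x \<le> d i"
  shows "step (pt x i) (pt (low i x) (i + 1))"
proof -
  have "x \<le> 1" using assms d_range[of i] by linarith
  then have "rule d (pt x i) (i + 1)"
    unfolding rule_def using assms by (intro exI[of _ i] exI[of _ x]) auto
  then show ?thesis
    unfolding step_def phi_def using fmap_low[OF \<open>x \<le> 1\<close>, of i] by force
qed

lemma step_high:
  assumes "x \<le> 1" "d i \<le> x"
  shows "step (pt x i) (pt (high i x) (i + 2))"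
proof -
  have "0 \<le> x" using assms d_range[of i] by linarith
  then have "rule d (pt x i) (i + 2)"
    unfolding rule_def using assms by (intro exI[of _ i] exI[of _ x]) auto
  then show ?thesis
    unfolding step_def phi_def using fmap_high[OF \<open>0 \<le> x\<close>, of i] by force
qed

lemma step_below:
  assumes "0 < x" "x < d i" "step (pt x i) z"
  shows "z = pt (low i x) (i + 1)"
proof -
  have "x < 1" using assms d_range[of i] by linarith
  from assms(3) show ?thesis
    by (rule step_cases) (use pt_eq_interior[OF _ assms(1) \<open>x < 1\<close>] assms in fastforce)
qed

lemma step_above:
  assumes "x < 1" "d i < x" "step (pt x i) z"
  shows "z = pt (high i x) (i + 2)"
proof -
  have "0 < x" using assms d_range[of i] by linarith
  from assms(3) show ?thesis
    by (rule step_cases) (use pt_eq_interior[OF _ \<open>0 < x\<close> assms(1)] assms in fastforce)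
qed

lemma step_target_interior:
  assumes "step z z'"
  obtains y e where "0 < y" "y < 1" "z' = pt y e"
  using assms
proof (rule step_cases)
  fix i x
  assume x: "0 \<le> x" "x \<le> 1"
    and z': "x \<le> d i \<and> z' = pt (low i x) (i + 1) \<or> d i \<le> x \<and> z' = pt (high i x) (i + 2)"
  show thesis
    using z' low_range[OF x(1), of i] high_range[OF _ x(2), of i] d_range[of i] that
    by (metis less_le_trans order_le_less_trans)
qed

lemma step_exists:
  assumes "0 \<le> x" "x \<le> 1"
  shows "\<exists>z. step (pt x i) z"
  using step_low[OF assms(1)] step_high[OF assms(2)] by (meson linorder_le_cases)

lemma step_arrival:
  assumes "step z (pt y e)"
  obtains (low) x where "0 \<le> x" "x \<le> d (e + 2)" "z = pt x (e + 2)" "y = low (e + 2) x"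
    | (high) x where "d (e + 1) \<le> x" "x \<le> 1" "z = pt x (e + 1)" "y = high (e + 1) x"
  using assms
proof (rule step_cases)
  fix i x
  assume x: "0 \<le> x" "x \<le> 1" "z = pt x i"
    and z': "x \<le> d i \<and> pt y e = pt (low i x) (i + 1) \<or> d i \<le> x \<and> pt y e = pt (high i x) (i + 2)"
  from z' show thesis
  proof (elim disjE conjE)
    assume "x \<le> d i" "pt y e = pt (low i x) (i + 1)"
    moreover have "0 < low i x" "low i x < 1"
      using low_range[OF x(1), of i] \<open>x \<le> d i\<close> d_range[of i] by auto
    ultimately have "e = i + 1" "y = low i x" using pt_eq_interior by metis+
    then show thesis using low x \<open>x \<le> d i\<close> by simp
  next
    assume "d i \<le> x" "pt y e = pt (high i x) (i + 2)"
    moreover have "0 < high i x" "high i x < 1"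
      using high_range[OF _ x(2), of i] \<open>d i \<le> x\<close> d_range[of i] by auto
    ultimately have "e = i + 2" "y = high i x" using pt_eq_interior by metis+
    then show thesis using high x \<open>d i \<le> x\<close> by simp
  qed
qed

lemma step_inj:
  assumes "step z1 z" "step z2 z"
  shows "z1 = z2"
proof -
  obtain y e where z: "z = pt y e"
    using step_target_interior[OF assms(1)] by blast
  have mixed: "pt x1 (e + 2) = pt x2 (e + 1)"
    if "0 \<le> x1" "x1 \<le> 1" "0 \<le> x2" "x2 \<le> 1" "low (e + 2) x1 = high (e + 1) x2" for x1 x2
    using low_eq_high_imp_vertex[of x1 x2 "e + 2"] pt_0_eq_pt_1[of "e + 2"] that by simp
  have d01: "0 < d i" "d i < 1" for i using d_range[of i] by auto
  from assms(1)[unfolded z] show ?thesis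
  proof (cases rule: step_arrival)
    case (low x1)
    note z1 = this
    from assms(2)[unfolded z] show ?thesis
    proof (cases rule: step_arrival)
      case (low x2)
      with z1 have "x1 = x2"
        using low_inj[of x1 x2 "e + 2"] d01[of "e + 2"] by simp
      with z1 low show ?thesis by simp
    next
      case (high x2)
      with z1 show ?thesis
        using mixed[of x1 x2] d01[of "e + 2"] d01[of "e + 1"] by simp
    qed
  next
    case (high x1)
    note z1 = this
    from assms(2)[unfolded z] show ?thesis
    proof (cases rule: step_arrival)
      case (low x2)
      with z1 show ?thesis
        using mixed[of x2 x1] d01[of "e + 2"] d01[of "e + 1"] by simp
    next
      case (high x2)
      with z1 have "x1 = x2"
        using high_inj[of x1 x2 "e + 1"] d01[of "e + 1"] by simp
      with z1 high show ?thesis by simp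
    qed
  qed
qed

lemma relpowp_step_inj: "(step ^^ n) z1 z \<Longrightarrow> (step ^^ n) z2 z \<Longrightarrow> z1 = z2"
proof (induction n arbitrary: z1 z2)
  case (Suc n)
  obtain y1 where y1: "step z1 y1" "(step ^^ n) y1 z"
    using Suc.prems(1) by (rule relpowp_Suc_E2)
  obtain y2 where y2: "step z2 y2" "(step ^^ n) y2 z"
    using Suc.prems(2) by (rule relpowp_Suc_E2)
  have "y1 = y2" using Suc.IH y1(2) y2(2) .
  then show ?case using step_inj y1(1) y2(1) by blast
qed simp

lemma trajectory_iff: "trajectory rho d zs \<longleftrightarrow> (\<forall>t. step (zs t) (zs (Suc t)))"
  unfolding trajectory_def step_def ..

lemma trajectory_from_edge:
  assumes "0 \<le> x" "x \<le> 1"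
  obtains zs where "trajectory rho d zs" "zs 0 = pt x i"
proof -
  define on_edge where "on_edge z \<longleftrightarrow> (\<exists>y e. 0 \<le> y \<and> y \<le> 1 \<and> z = pt y e)" for z
  have successor: "\<exists>z'. on_edge z' \<and> step z z'" if z: "on_edge z" for z
  proof -
    obtain y e where y: "0 \<le> y" "y \<le> 1" "z = pt y e" using z unfolding on_edge_def by blast
    obtain z' where z': "step z z'" using step_exists[OF y(1,2), of e] y(3) by blast
    obtain y' e' where "0 < y'" "y' < 1" "z' = pt y' e'"
      using step_target_interior[OF z'] .
    then have "on_edge z'" unfolding on_edge_def by (intro exI[of _ y'] exI[of _ e']) simp
    then show ?thesis using z' by blast
  qed
  have "\<exists>zs. \<forall>n. (on_edge (zs n) \<and> (n = 0 \<longrightarrow> zs n = pt x i)) \<and> step (zs n) (zs (Suc n))"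
  proof (rule dependent_nat_choice)
    show "\<exists>z. on_edge z \<and> (0 = 0 \<longrightarrow> z = pt x i)"
      unfolding on_edge_def using assms by blast
  next
    fix z and n :: nat
    assume "on_edge z \<and> (n = 0 \<longrightarrow> z = pt x i)"
    then show "\<exists>z'. (on_edge z' \<and> (Suc n = 0 \<longrightarrow> z' = pt x i)) \<and> step z z'"
      using successor by simp
  qed
  then show thesis using that trajectory_iff by blast
qed

lemma preimage_iff_relpowp:
  assumes "0 \<le> x" "x \<le> 1"
  shows "preimage rho d z (pt x i) \<longleftrightarrow> (\<exists>t\<ge>1. (step ^^ t) z (pt x i))"
proof
  assume "preimage rho d z (pt x i)"
  then obtain zs t where zs: "trajectory rho d zs" "zs 0 = z" "t \<ge> 1" "zs t = pt x i"
    unfolding preimage_def by blast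
  have "(step ^^ t) (zs 0) (zs t)"
    using zs(1) unfolding relpowp_fun_conv trajectory_iff by blast
  then show "\<exists>t\<ge>1. (step ^^ t) z (pt x i)" using zs by auto
next
  assume "\<exists>t\<ge>1. (step ^^ t) z (pt x i)"
  then obtain t f where t: "t \<ge> 1" and f: "f 0 = z" "f t = pt x i" "\<forall>s<t. step (f s) (f (Suc s))"
    unfolding relpowp_fun_conv by blast
  obtain tail where tail: "trajectory rho d tail" "tail 0 = pt x i"
    using trajectory_from_edge[OF assms] .
  define zs where "zs s = (if s \<le> t then f s else tail (s - t))" for s
  have "step (zs s) (zs (Suc s))" for s
  proof (cases "s < t")
    case True
    then show ?thesis using f(3) unfolding zs_def by simp
  next
    case False
    then have "zs s = tail (s - t)" "zs (Suc s) = tail (Suc (s - t))"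
      using f(2) tail(2) unfolding zs_def by (auto simp: Suc_diff_le)
    then show ?thesis using tail(1) trajectory_iff by simp
  qed
  then have "trajectory rho d zs" using trajectory_iff by blast
  moreover have "zs 0 = z" "zs t = pt x i" using f unfolding zs_def by auto
  ultimately show "preimage rho d z (pt x i)" unfolding preimage_def using t by blast
qed

lemma segment_step_branch:
  assumes "0 < \<alpha>" "\<alpha> < 1" "0 < \<beta>" "\<beta> < 1"
    and step_g: "\<And>y. y \<in> closed_segment \<alpha> \<beta> \<Longrightarrow> step (pt y e) (pt (g y) e')"
    and step_only_g: "\<And>y z. y \<in> closed_segment \<alpha> \<beta> \<Longrightarrow> step (pt y e) z \<Longrightarrow> z = pt (g y) e'"
    and g_cont: "continuous_on {0..1} g"
    and g_range: "\<And>y. 0 < y \<Longrightarrow> y < 1 \<Longrightarrow> 0 < g y \<and> g y < 1"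
    and g_nonexp: "\<And>x y. 0 \<le> x \<Longrightarrow> x \<le> 1 \<Longrightarrow> 0 \<le> y \<Longrightarrow> y \<le> 1 \<Longrightarrow> \<bar>g x - g y\<bar> \<le> \<bar>x - y\<bar>"
  shows "0 < g \<alpha>" "g \<alpha> < 1" "0 < g \<beta>" "g \<beta> < 1" "\<bar>g \<alpha> - g \<beta>\<bar> \<le> \<bar>\<alpha> - \<beta>\<bar>"
    "\<And>z. step (pt \<alpha> e) z \<Longrightarrow> z = pt (g \<alpha>) e'" "\<And>z. step (pt \<beta> e) z \<Longrightarrow> z = pt (g \<beta>) e'"
    "\<And>y'. y' \<in> closed_segment (g \<alpha>) (g \<beta>) \<Longrightarrow> \<exists>y \<in> closed_segment \<alpha> \<beta>. step (pt y e) (pt y' e')"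
proof -
  show "0 < g \<alpha>" "g \<alpha> < 1" "0 < g \<beta>" "g \<beta> < 1" using g_range assms(1-4) by auto
  show "\<bar>g \<alpha> - g \<beta>\<bar> \<le> \<bar>\<alpha> - \<beta>\<bar>" using g_nonexp assms(1-4) by simp
  show "z = pt (g \<alpha>) e'" if "step (pt \<alpha> e) z" for z using step_only_g that by simp
  show "z = pt (g \<beta>) e'" if "step (pt \<beta> e) z" for z using step_only_g that by simp
next
  fix y'
  assume "y' \<in> closed_segment (g \<alpha>) (g \<beta>)"
  moreover have "continuous_on (closed_segment \<alpha> \<beta>) g"
    using assms(1-4) by (intro continuous_on_subset[OF g_cont]) (auto simp: closed_segment_eq_real_ivl)
  ultimately obtain y where "y \<in> closed_segment \<alpha> \<beta>" "g y = y'"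
    using IVT'_closed_segment_real by blast
  then show "\<exists>y \<in> closed_segment \<alpha> \<beta>. step (pt y e) (pt y' e')" using step_g by blast
qed

lemma segment_step:
  assumes "0 < \<alpha>" "\<alpha> < 1" "0 < \<beta>" "\<beta> < 1" "d e \<notin> closed_segment \<alpha> \<beta>"
  obtains e' \<alpha>' \<beta>' where "0 < \<alpha>'" "\<alpha>' < 1" "0 < \<beta>'" "\<beta>' < 1" "\<bar>\<alpha>' - \<beta>'\<bar> \<le> \<bar>\<alpha> - \<beta>\<bar>"
    "\<And>z. step (pt \<alpha> e) z \<Longrightarrow> z = pt \<alpha>' e'" "\<And>z. step (pt \<beta> e) z \<Longrightarrow> z = pt \<beta>' e'"
    "\<And>y'. y' \<in> closed_segment \<alpha>' \<beta>' \<Longrightarrow> \<exists>y \<in> closed_segment \<alpha> \<beta>. step (pt y e) (pt y' e')"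
proof -
  have seg: "y \<in> closed_segment \<alpha> \<beta> \<longleftrightarrow> min \<alpha> \<beta> \<le> y \<and> y \<le> max \<alpha> \<beta>" for y
    by (auto simp: closed_segment_eq_real_ivl)
  consider "max \<alpha> \<beta> < d e" | "d e < min \<alpha> \<beta>"
    using assms(5) seg by force
  then show thesis
  proof cases
    case 1
    then have inside: "0 < y \<and> y < d e" if "y \<in> closed_segment \<alpha> \<beta>" for y
      using that assms by (auto simp: seg)
    have step_g: "step (pt y e) (pt (low e y) (e + 1))" if "y \<in> closed_segment \<alpha> \<beta>" for y
      using step_low[of y e] inside[OF that] by simp
    have only_g: "z = pt (low e y) (e + 1)" if "y \<in> closed_segment \<alpha> \<beta>" "step (pt y e) z" for y z
      using step_below[of y e z] inside[OF that(1)] that(2) by blast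
    have range_g: "0 < low e y \<and> low e y < 1" if "0 < y" "y < 1" for y
      using low_range that by simp
    show thesis
      by (rule that[OF segment_step_branch[OF assms(1-4) step_g only_g continuous_on_low range_g
              low_nonexpansive]])
  next
    case 2
    then have inside: "d e < y \<and> y < 1" if "y \<in> closed_segment \<alpha> \<beta>" for y
      using that assms by (auto simp: seg)
    have step_g: "step (pt y e) (pt (high e y) (e + 2))" if "y \<in> closed_segment \<alpha> \<beta>" for y
      using step_high[of y e] inside[OF that] by simp
    have only_g: "z = pt (high e y) (e + 2)" if "y \<in> closed_segment \<alpha> \<beta>" "step (pt y e) z" for y z
      using step_above[of y e z] inside[OF that(1)] that(2) by blast
    have range_g: "0 < high e y \<and> high e y < 1" if "0 < y" "y < 1" for y
      using high_range that by simp
    show thesis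
      by (rule that[OF segment_step_branch[OF assms(1-4) step_g only_g continuous_on_high range_g
              high_nonexpansive]])
  qed
qed

lemma segment_step_reachable:
  assumes "0 < \<alpha>" "\<alpha> < 1" "0 < \<beta>" "\<beta> < 1"
    and reach: "\<forall>y' \<in> closed_segment \<alpha> \<beta>. \<exists>y \<in> closed_segment xa xb. (step ^^ m) (pt y i) (pt y' e)"
    and avoid: "\<forall>y \<in> closed_segment xa xb. \<not> (step ^^ m) (pt y i) (dpt d e)"
  obtains e' \<alpha>' \<beta>' where "0 < \<alpha>'" "\<alpha>' < 1" "0 < \<beta>'" "\<beta>' < 1" "\<bar>\<alpha>' - \<beta>'\<bar> \<le> \<bar>\<alpha> - \<beta>\<bar>"
    "\<And>z. step (pt \<alpha> e) z \<Longrightarrow> z = pt \<alpha>' e'" "\<And>z. step (pt \<beta> e) z \<Longrightarrow> z = pt \<beta>' e'"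
    "\<forall>y'' \<in> closed_segment \<alpha>' \<beta>'. \<exists>y \<in> closed_segment xa xb. (step ^^ Suc m) (pt y i) (pt y'' e')"
proof -
  have no_decision: "d e \<notin> closed_segment \<alpha> \<beta>"
    using reach avoid unfolding dpt_def by blast
  obtain \<alpha>' \<beta>' e' where new: "0 < \<alpha>'" "\<alpha>' < 1" "0 < \<beta>'" "\<beta>' < 1"
      "\<bar>\<alpha>' - \<beta>'\<bar> \<le> \<bar>\<alpha> - \<beta>\<bar>"
      "\<And>z. step (pt \<alpha> e) z \<Longrightarrow> z = pt \<alpha>' e'" "\<And>z. step (pt \<beta> e) z \<Longrightarrow> z = pt \<beta>' e'"
    and reach_step: "\<And>y'. y' \<in> closed_segment \<alpha>' \<beta>' \<Longrightarrow>
      \<exists>y \<in> closed_segment \<alpha> \<beta>. step (pt y e) (pt y' e')"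
    by (rule segment_step[OF assms(1-4) no_decision]) (rule that)
  have "\<forall>y'' \<in> closed_segment \<alpha>' \<beta>'. \<exists>y \<in> closed_segment xa xb. (step ^^ Suc m) (pt y i) (pt y'' e')"
  proof
    fix y''
    assume "y'' \<in> closed_segment \<alpha>' \<beta>'"
    then obtain y' where "y' \<in> closed_segment \<alpha> \<beta>" "step (pt y' e) (pt y'' e')"
      using reach_step by blast
    moreover from this(1) obtain y where "y \<in> closed_segment xa xb" "(step ^^ m) (pt y i) (pt y' e)"
      using reach by blast
    ultimately show "\<exists>y \<in> closed_segment xa xb. (step ^^ Suc m) (pt y i) (pt y'' e')"
      by (meson relpowp_Suc_I)
  qed
  from new this show thesis by (rule that)
qed

lemma segment_paths_close:
  assumes "0 < xa" "xa < 1" "0 < xb" "xb < 1"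
    and avoid: "\<And>y s e. y \<in> closed_segment xa xb \<Longrightarrow> s < n \<Longrightarrow> \<not> (step ^^ s) (pt y i) (dpt d e)"
    and za: "za 0 = pt xa i" "\<And>s. s < n \<Longrightarrow> step (za s) (za (Suc s))"
    and zb: "zb 0 = pt xb i" "\<And>s. s < n \<Longrightarrow> step (zb s) (zb (Suc s))"
  obtains e \<alpha> \<beta> where "za n = pt \<alpha> e" "zb n = pt \<beta> e" "\<bar>\<alpha> - \<beta>\<bar> \<le> \<bar>xa - xb\<bar>"
proof -
  have "\<exists>e \<alpha> \<beta>. za m = pt \<alpha> e \<and> zb m = pt \<beta> e \<and> 0 < \<alpha> \<and> \<alpha> < 1 \<and> 0 < \<beta> \<and> \<beta> < 1
      \<and> \<bar>\<alpha> - \<beta>\<bar> \<le> \<bar>xa - xb\<bar>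
      \<and> (\<forall>y' \<in> closed_segment \<alpha> \<beta>. \<exists>y \<in> closed_segment xa xb. (step ^^ m) (pt y i) (pt y' e))"
    if "m \<le> n" for m
    using that
  proof (induction m)
    case 0
    show ?case
      using assms(1-4) za(1) zb(1) by (intro exI[of _ i] exI[of _ xa] exI[of _ xb]) auto
  next
    case (Suc m)
    then obtain e \<alpha> \<beta> where IH: "za m = pt \<alpha> e" "zb m = pt \<beta> e"
        "0 < \<alpha>" "\<alpha> < 1" "0 < \<beta>" "\<beta> < 1" "\<bar>\<alpha> - \<beta>\<bar> \<le> \<bar>xa - xb\<bar>"
        "\<forall>y' \<in> closed_segment \<alpha> \<beta>. \<exists>y \<in> closed_segment xa xb. (step ^^ m) (pt y i) (pt y' e)"
      by auto
    have "\<forall>y \<in> closed_segment xa xb. \<not> (step ^^ m) (pt y i) (dpt d e)"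
      using avoid Suc.prems by simp
    obtain \<alpha>' \<beta>' e' where new: "0 < \<alpha>'" "\<alpha>' < 1" "0 < \<beta>'" "\<beta>' < 1"
        "\<bar>\<alpha>' - \<beta>'\<bar> \<le> \<bar>\<alpha> - \<beta>\<bar>"
      and det: "\<And>z. step (pt \<alpha> e) z \<Longrightarrow> z = pt \<alpha>' e'" "\<And>z. step (pt \<beta> e) z \<Longrightarrow> z = pt \<beta>' e'"
      and reach: "\<forall>y'' \<in> closed_segment \<alpha>' \<beta>'.
        \<exists>y \<in> closed_segment xa xb. (step ^^ Suc m) (pt y i) (pt y'' e')"
      by (rule segment_step_reachable[OF IH(3-6,8) \<open>\<forall>y \<in> closed_segment xa xb. _\<close>]) (rule that)
    have "za (Suc m) = pt \<alpha>' e'" "zb (Suc m) = pt \<beta>' e'"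
      using det za(2)[of m] zb(2)[of m] IH(1,2) Suc.prems by simp_all
    then show ?case
      using new IH(7) reach by (intro exI[of _ e'] exI[of _ \<alpha>'] exI[of _ \<beta>']) auto
  qed
  then obtain e \<alpha> \<beta> where "za n = pt \<alpha> e" "zb n = pt \<beta> e" "\<bar>\<alpha> - \<beta>\<bar> \<le> \<bar>xa - xb\<bar>"
    by blast
  then show thesis by (rule that)
qed

lemma preimage_dpt_iff: "preimage rho d z (dpt d e) \<longleftrightarrow> (\<exists>t\<ge>1. (step ^^ t) z (dpt d e))"
  unfolding dpt_def using d_range[of e] by (intro preimage_iff_relpowp) auto

end

subsection \<open>The backward orbit of a decision point\<close>

lemma finite_Collect_subsingleton:
  assumes "\<And>a b. P a \<Longrightarrow> P b \<Longrightarrow> a = b"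
  shows "finite {z. P z}"
proof (cases "\<exists>a. P a")
  case True
  then obtain a where "P a" by blast
  then have "{z. P z} \<subseteq> {a}" using assms by blast
  then show ?thesis using finite_subset by blast
qed simp

locale backward_orbit = switching_system +
  fixes j :: 3
  assumes infinite_preimages: "infinite {z. preimage rho d z (dpt d j)}"
begin

lemma relpowp_preimage_exists: "\<exists>z. (step ^^ t) z (dpt d j)"
proof (rule ccontr)
  assume none: "\<nexists>z. (step ^^ t) z (dpt d j)"
  have late: "\<not> (step ^^ s) z (dpt d j)" if "t \<le> s" for s z
  proof
    assume "(step ^^ s) z (dpt d j)"
    then have "((step ^^ (s - t)) OO (step ^^ t)) z (dpt d j)"
      using that by (simp add: relpowp_add[symmetric])
    then show False using none by blast
  qed
  have "{z. preimage rho d z (dpt d j)} \<subseteq> (\<Union>s<t. {z. (step ^^ s) z (dpt d j)})"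
  proof
    fix z
    assume "z \<in> {z. preimage rho d z (dpt d j)}"
    then obtain s where "(step ^^ s) z (dpt d j)" by (auto simp: preimage_dpt_iff)
    moreover from this have "s < t" using late not_le by blast
    ultimately show "z \<in> (\<Union>s<t. {z. (step ^^ s) z (dpt d j)})" by blast
  qed
  moreover have "finite (\<Union>s<t. {z. (step ^^ s) z (dpt d j)})"
    using relpowp_step_inj by (intro finite_UN_I finite_lessThan finite_Collect_subsingleton)
  ultimately show False using infinite_preimages finite_subset by blast
qed

definition orbit :: "nat \<Rightarrow> real^3" where
  "orbit t = (THE z. (step ^^ t) z (dpt d j))"

lemma relpowp_orbit: "(step ^^ t) (orbit t) (dpt d j)"
proof -
  have "\<exists>!z. (step ^^ t) z (dpt d j)"
    using relpowp_preimage_exists relpowp_step_inj by blast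
  then show ?thesis unfolding orbit_def by (rule theI')
qed

lemma orbit_unique: "(step ^^ t) z (dpt d j) \<Longrightarrow> z = orbit t"
  using relpowp_orbit relpowp_step_inj by blast

lemma orbit_0: "orbit 0 = dpt d j"
  using orbit_unique[of 0] by simp

lemma step_orbit: "step (orbit (Suc t)) (orbit t)"
proof -
  obtain z where "step (orbit (Suc t)) z" "(step ^^ t) z (dpt d j)"
    using relpowp_orbit[of "Suc t"] by (rule relpowp_Suc_E2)
  then show ?thesis using orbit_unique by blast
qed

lemma range_orbit: "range orbit = insert (dpt d j) {z. preimage rho d z (dpt d j)}"
proof (intro antisym subsetI)
  fix z
  assume "z \<in> range orbit"
  then obtain t where "z = orbit t" by blast
  then show "z \<in> insert (dpt d j) {z. preimage rho d z (dpt d j)}"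
    using relpowp_orbit[of t] orbit_0 preimage_dpt_iff[of z j]
    by (cases t) (auto simp del: relpowp.simps)
next
  fix z
  assume "z \<in> insert (dpt d j) {z. preimage rho d z (dpt d j)}"
  then consider "z = dpt d j" | "preimage rho d z (dpt d j)" by blast
  then show "z \<in> range orbit"
  proof cases
    case 1
    then show ?thesis using orbit_0 by (metis rangeI)
  next
    case 2
    then obtain t where "(step ^^ t) z (dpt d j)" by (auto simp: preimage_dpt_iff)
    then show ?thesis using orbit_unique by blast
  qed
qed

lemma orbit_interior:
  obtains y e where "0 < y" "y < 1" "orbit t = pt y e"
  using step_target_interior[OF step_orbit[of t]] .

lemma inj_orbit: "inj orbit"
proof (rule ccontr)
  assume "\<not> inj orbit"
  then obtain s t where st: "orbit s = orbit t" "s < t"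
    unfolding inj_def by (metis linorder_neqE_nat)
  have shift: "orbit (s + q) = orbit (t + q)" for q
  proof (induction q)
    case (Suc q)
    then show ?case using step_orbit[of "s + q"] step_orbit[of "t + q"] step_inj by simp
  qed (use st in simp)
  have "orbit n \<in> orbit ` {..<t}" for n
  proof (induction n rule: less_induct)
    case (less n)
    show ?case
    proof (cases "n < t")
      case False
      then have "orbit n = orbit (s + (n - t))" using shift[of "n - t"] by simp
      moreover have "s + (n - t) < n" using False st(2) by simp
      ultimately show ?thesis using less by simp
    qed simp
  qed
  then have "finite (range orbit)" by (meson finite_imageI finite_lessThan finite_subset image_subsetI)
  then show False using infinite_preimages range_orbit by simp
qed

definition orbit_params :: "3 \<Rightarrow> real set" where
  "orbit_params i = {y. 0 < y \<and> y < 1 \<and> pt y i \<in> range orbit}"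

lemma orbit_accumulates_on_edge:
  obtains i x where "x islimpt orbit_params i"
proof -
  have cover: "range orbit \<subseteq> (\<Union>i. (\<lambda>y. pt y i) ` orbit_params i)"
  proof
    fix z
    assume "z \<in> range orbit"
    then obtain t where "z = orbit t" by blast
    obtain y e where "0 < y" "y < 1" "orbit t = pt y e" by (rule orbit_interior)
    moreover have "pt y e \<in> range orbit" using \<open>orbit t = pt y e\<close> by (metis rangeI)
    ultimately have "y \<in> orbit_params e" "z = pt y e"
      unfolding orbit_params_def using \<open>z = orbit t\<close> by auto
    then show "z \<in> (\<Union>i. (\<lambda>y. pt y i) ` orbit_params i)" by blast
  qed
  have "\<not> (\<forall>i. finite (orbit_params i))"
  proof
    assume "\<forall>i. finite (orbit_params i)"
    then have "finite (\<Union>i. (\<lambda>y. pt y i) ` orbit_params i)" by simp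
    then have "finite (range orbit)" using cover by (rule finite_subset[rotated])
    then show False using inj_orbit range_inj_infinite by blast
  qed
  then obtain i where "infinite (orbit_params i)" by blast
  moreover have "orbit_params i \<subseteq> {0..1}" unfolding orbit_params_def by auto
  ultimately obtain x where "x islimpt orbit_params i"
    using compact_eq_Bolzano_Weierstrass[of "{0..1::real}"] compact_Icc by blast
  then show thesis by (rule that)
qed

lemma first_orbit_visits:
  assumes "infinite (orbit_params i \<inter> {lo<..<hi})"
  obtains a b xa xb where "a < b" "orbit a = pt xa i" "orbit b = pt xb i"
    "lo < xa" "xa < hi" "lo < xb" "xb < hi" "0 < xa" "xa < 1" "0 < xb" "xb < 1"
    "\<And>m y. lo < y \<Longrightarrow> y < hi \<Longrightarrow> 0 < y \<Longrightarrow> y < 1 \<Longrightarrow> orbit m = pt y i \<Longrightarrow> a \<le> m"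
proof -
  define S where "S = {m. \<exists>y. lo < y \<and> y < hi \<and> 0 < y \<and> y < 1 \<and> orbit m = pt y i}"
  have "orbit_params i \<inter> {lo<..<hi} \<subseteq> (\<lambda>m. orbit m $ (i + 2)) ` S"
  proof
    fix y
    assume "y \<in> orbit_params i \<inter> {lo<..<hi}"
    then have y: "lo < y" "y < hi" "0 < y" "y < 1" "pt y i \<in> range orbit"
      unfolding orbit_params_def by auto
    obtain m where "orbit m = pt y i" using y(5) by (metis rangeE)
    then have "m \<in> S" "y = orbit m $ (i + 2)" using y unfolding S_def by auto
    then show "y \<in> (\<lambda>m. orbit m $ (i + 2)) ` S" by blast
  qed
  then have "infinite S" using assms finite_subset by blast
  define a where "a = (LEAST m. m \<in> S)"
  have "infinite (S - {a})" using \<open>infinite S\<close> by simp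
  then obtain b where "b \<in> S" "b \<noteq> a" using infinite_imp_nonempty by blast
  have "a \<in> S" unfolding a_def using \<open>b \<in> S\<close> by (rule LeastI)
  have minimal: "a \<le> m" if "m \<in> S" for m unfolding a_def using that by (rule Least_le)
  then have "a < b" using \<open>b \<in> S\<close> \<open>b \<noteq> a\<close> by fastforce
  obtain xa where xa: "lo < xa" "xa < hi" "0 < xa" "xa < 1" "orbit a = pt xa i"
    using \<open>a \<in> S\<close> unfolding S_def by blast
  obtain xb where xb: "lo < xb" "xb < hi" "0 < xb" "xb < 1" "orbit b = pt xb i"
    using \<open>b \<in> S\<close> unfolding S_def by blast
  show thesis
  proof (rule that[OF \<open>a < b\<close> xa(5) xb(5) xa(1,2) xb(1,2) xa(3,4) xb(3,4)])
    show "a \<le> m" if "lo < y" "y < hi" "0 < y" "y < 1" "orbit m = pt y i" for m y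
      using that by (intro minimal) (auto simp: S_def)
  qed
qed

definition obstacles :: "nat \<Rightarrow> (real^3) set" where
  "obstacles k = orbit ` {..k} \<union> (\<Union>e \<in> - {j}. insert (dpt d e) {z. preimage rho d z (dpt d e)})"

lemma interval_misses_decision_points:
  assumes unobstructed: "\<And>y. lo < y \<Longrightarrow> y < hi \<Longrightarrow> pt y i \<notin> obstacles k"
    and first: "\<And>m y. lo < y \<Longrightarrow> y < hi \<Longrightarrow> 0 < y \<Longrightarrow> y < 1 \<Longrightarrow> orbit m = pt y i \<Longrightarrow> a \<le> m"
    and y: "lo < y" "y < hi" "0 < y" "y < 1"
    and "s < a"
  shows "\<not> (step ^^ s) (pt y i) (dpt d e)"
proof
  assume reach: "(step ^^ s) (pt y i) (dpt d e)"
  show False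
  proof (cases "e = j")
    case True
    then have "orbit s = pt y i" using reach orbit_unique by metis
    then show False using first[OF y] \<open>s < a\<close> by (meson not_le)
  next
    case False
    have "pt y i \<in> insert (dpt d e) {z. preimage rho d z (dpt d e)}"
      using reach by (cases "s = 0") (auto simp: preimage_dpt_iff)
    then have "pt y i \<in> obstacles k" using False unfolding obstacles_def by blast
    then show False using unobstructed y by blast
  qed
qed

lemma orbit_returns_near:
  assumes "infinite (orbit_params i \<inter> {lo<..<hi})"
    and unobstructed: "\<And>y. lo < y \<Longrightarrow> y < hi \<Longrightarrow> pt y i \<notin> obstacles k"
  obtains m where "orbit m \<noteq> orbit k" "dist (orbit m) (orbit k) < 2 * (hi - lo)"
proof -
  obtain a b xa xb where ab: "a < b" "orbit a = pt xa i" "orbit b = pt xb i"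
    "lo < xa" "xa < hi" "lo < xb" "xb < hi" "0 < xa" "xa < 1" "0 < xb" "xb < 1"
    and first: "\<And>m y. lo < y \<Longrightarrow> y < hi \<Longrightarrow> 0 < y \<Longrightarrow> y < 1 \<Longrightarrow> orbit m = pt y i \<Longrightarrow> a \<le> m"
    by (rule first_orbit_visits[OF assms(1)]) (rule that)
  have "k < a"
  proof (rule ccontr)
    assume "\<not> k < a"
    then have "orbit a \<in> obstacles k" unfolding obstacles_def by auto
    then show False using unobstructed ab by simp
  qed
  have avoid: "\<not> (step ^^ s) (pt y i) (dpt d e)"
    if "y \<in> closed_segment xa xb" "s < a - k" for y s e
  proof -
    have "lo < y \<and> y < hi \<and> 0 < y \<and> y < 1"
      using that(1) ab by (auto simp: closed_segment_eq_real_ivl split: if_splits)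
    then show ?thesis
      using interval_misses_decision_points[OF unobstructed first] that(2) by simp
  qed
  have za: "step (orbit (a - s)) (orbit (a - Suc s))" if "s < a - k" for s
    using step_orbit[of "a - Suc s"] that by (simp add: Suc_diff_Suc)
  have zb: "step (orbit (b - s)) (orbit (b - Suc s))" if "s < a - k" for s
    using step_orbit[of "b - Suc s"] that \<open>a < b\<close> by (simp add: Suc_diff_Suc)
  obtain \<alpha> \<beta> e where close: "orbit (a - (a - k)) = pt \<alpha> e" "orbit (b - (a - k)) = pt \<beta> e"
    "\<bar>\<alpha> - \<beta>\<bar> \<le> \<bar>xa - xb\<bar>"
    by (rule segment_paths_close[where za = "\<lambda>s. orbit (a - s)" and zb = "\<lambda>s. orbit (b - s)"
          and n = "a - k", OF ab(8-11) avoid _ za _ zb]) (use ab in simp_all)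
  define m where "m = b - (a - k)"
  have "orbit k = pt \<alpha> e" "orbit m = pt \<beta> e"
    using close \<open>k < a\<close> unfolding m_def by simp_all
  have "m \<noteq> k" unfolding m_def using \<open>a < b\<close> \<open>k < a\<close> by simp
  then have "orbit m \<noteq> orbit k" using inj_orbit by (simp add: inj_eq)
  moreover have "\<bar>xa - xb\<bar> < hi - lo" using ab(4-7) by (simp add: abs_less_iff)
  then have "dist (orbit m) (orbit k) < 2 * (hi - lo)"
    using close(3) dist_pt_le[of \<beta> e \<alpha>] \<open>orbit k = pt \<alpha> e\<close> \<open>orbit m = pt \<beta> e\<close>
    by (simp add: abs_minus_commute)
  ultimately show thesis by (rule that)
qed

lemma orbit_islimpt:
  assumes "\<And>e. e \<noteq> j \<Longrightarrow> finite {z. preimage rho d z (dpt d e)}"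
  shows "orbit k islimpt range orbit"
proof (unfold islimpt_approachable, intro allI impI)
  fix \<epsilon> :: real
  assume "0 < \<epsilon>"
  obtain i x where "x islimpt orbit_params i"
    by (rule orbit_accumulates_on_edge)
  have "finite (obstacles k)" unfolding obstacles_def using assms by simp
  moreover have "inj (\<lambda>y. pt y i)" by (rule injI) simp
  ultimately have "finite ((\<lambda>y. pt y i) -` obstacles k)" by (rule finite_vimageI)
  moreover have "0 < \<epsilon> / 2" using \<open>0 < \<epsilon>\<close> by simp
  ultimately obtain lo hi where
    J: "infinite (orbit_params i \<inter> {lo<..<hi})"
      "(\<lambda>y. pt y i) -` obstacles k \<inter> {lo<..<hi} = {}" "hi - lo \<le> \<epsilon> / 2"
    by (rule islimpt_interval_avoiding_finite[OF \<open>x islimpt _\<close>])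
  have "pt y i \<notin> obstacles k" if "lo < y" "y < hi" for y
    using J(2) that by auto
  then obtain m where "orbit m \<noteq> orbit k" "dist (orbit m) (orbit k) < 2 * (hi - lo)"
    using orbit_returns_near[OF J(1)] by blast
  then show "\<exists>x' \<in> range orbit. x' \<noteq> orbit k \<and> dist x' (orbit k) < \<epsilon>"
    using J(3) by force
qed

end

theorem corollary5p1:
  fixes rho d :: "3 \<Rightarrow> real"
  assumes rho_range: "\<And>i. 0 < rho i \<and> rho i < 1"
    and rho_sum: "rho 1 + rho 2 + rho 3 > 1"
    and rho_pair: "\<And>i j. i \<noteq> j \<Longrightarrow> rho i + rho j \<le> 1"
    and d_range: "\<And>i. 0 < d i \<and> d i < 1"
    and inf1: "infinite {z. preimage rho d z (dpt d 1)}"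
    and fin2: "finite {z. preimage rho d z (dpt d 2)}"
    and fin3: "finite {z. preimage rho d z (dpt d 3)}"
  shows "perfect_set (closure (P1 rho d)) \<and> uncountable (closure (P1 rho d))
         \<and> uncountable (closure (P1 rho d) - P1 rho d)"
proof -
  interpret backward_orbit rho d 1
    by unfold_locales (use rho_range rho_sum rho_pair d_range inf1 in auto)
  have P1: "P1 rho d = range orbit"
    unfolding P1_def by (rule range_orbit[symmetric])
  have "finite {z. preimage rho d z (dpt d e)}" if "e \<noteq> 1" for e
    using fin2 fin3 exhaust_3[of e] that by auto
  then have perfect: "perfect_set (closure (P1 rho d))"
    unfolding P1 using orbit_islimpt by (intro perfect_set_closure) auto
  moreover have "uncountable (closure (P1 rho d))"
    using perfect closure_subset[of "P1 rho d"] by (intro perfect_set_uncountable) (auto simp: P1)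
  moreover have "countable (P1 rho d)" unfolding P1 by simp
  ultimately show ?thesis using uncountable_minus_countable by blast
qed

end
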